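(* Let $k$ be an algebraically closed field of characteristic zero, $n\ge1$, $q\in k$ a primitive $2n$-th root of unity, $a\in k\setminus\{0\}$, and let $H=H_{4n}$ be the Hopf algebra generated by $z,x$ with $z^{2n}=1$, $zx=qxz$, $x^2=0$, $\Delta(z)=z\otimes z+a(1-q^{-2})z^{n+1}x\otimes zx$, $\Delta(x)=x\otimes 1+z^n\otimes x$, $\epsilon(z)=1$, $\epsilon(x)=0$, $S(z)=z^{-1}$, $S(x)=-z^nx$. For $i\in\mathbb Z_{2n}$ let $S_i$ be the $1$-dimensional $H$-module with basis $v_i$, $x\cdot v_i=0$, $z\cdot v_i=q^iv_i$, and let $M_i$ be the $2$-dimensional $H$-module with basis $v_1^i,v_2^i$ on which $x v_1^i=v_2^i$, $xv_2^i=0$, $zv_1^i=q^iv_1^i$, $zv_2^i=q^{i+1}v_2^i$. Then for all $i,j\in\mathbb Z_{2n}$, as $H$-modules (with the tensor product module structure via $\Delta$): (1) $S_i\otimes S_j\cong S_{i+j}$; (2) $S_i\otimes M_j\cong M_{i+j}$; (3) $M_i\otimes M_j\cong M_{i+j}\oplus M_{i+j+1}$, where indices are taken modulo $2n$. *)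

theory Defs
  imports "Jordan_Normal_Form.Matrix" "HOL-Computational_Algebra.Polynomial"
begin

definition alg_closed :: "'k::field itself \<Rightarrow> bool" where
  "alg_closed _ \<longleftrightarrow> (\<forall>p :: 'k poly. degree p > 0 \<longrightarrow> (\<exists>x. poly p x = 0))"

definition primitive_root :: "nat \<Rightarrow> 'k::field \<Rightarrow> bool" where
  "primitive_root m q \<longleftrightarrow> q ^ m = 1 \<and> (\<forall>l. 0 < l \<and> l < m \<longrightarrow> q ^ l \<noteq> 1)"

(* A finite-dimensional H_{4n}-module (with a chosen basis) is given by the
   matrices by which the generators z and x act: a pair (Z, X). *)
type_synonym 'k hmod = "'k mat \<times> 'k mat"

definition kron :: "'k::semiring_1 mat \<Rightarrow> 'k mat \<Rightarrow> 'k mat" where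
  "kron A B = mat (dim_row A * dim_row B) (dim_col A * dim_col B)
     (\<lambda>(i,j). A $$ (i div dim_row B, j div dim_col B) * B $$ (i mod dim_row B, j mod dim_col B))"

(* tensor product module via the coproduct
   Delta(z) = z(x)z + a(1-q^-2) z^(n+1)x (x) zx,  Delta(x) = x(x)1 + z^n(x)x *)
definition tensor_mod :: "nat \<Rightarrow> 'k::field \<Rightarrow> 'k \<Rightarrow> 'k hmod \<Rightarrow> 'k hmod \<Rightarrow> 'k hmod" where
  "tensor_mod n q a M N = (let (Z1, X1) = M; (Z2, X2) = N; d1 = dim_row Z1; d2 = dim_row Z2 in
     (kron Z1 Z2 + (a * (1 - inverse q ^ 2)) \<cdot>\<^sub>m kron (Z1 ^\<^sub>m (n+1) * X1) (Z2 * X2),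
      kron X1 (1\<^sub>m d2) + kron (Z1 ^\<^sub>m n) X2))"

definition dsum_mod :: "'k::zero hmod \<Rightarrow> 'k hmod \<Rightarrow> 'k hmod" where
  "dsum_mod M N = (let (Z1, X1) = M; (Z2, X2) = N; d1 = dim_row Z1; d2 = dim_row Z2 in
     (four_block_mat Z1 (0\<^sub>m d1 d2) (0\<^sub>m d2 d1) Z2,
      four_block_mat X1 (0\<^sub>m d1 d2) (0\<^sub>m d2 d1) X2))"

definition mod_iso :: "'k::field hmod \<Rightarrow> 'k hmod \<Rightarrow> bool" where
  "mod_iso M N = (let (Z1, X1) = M; (Z2, X2) = N; d = dim_row Z1 in
     dim_row Z2 = d \<and> (\<exists>P Q. P \<in> carrier_mat d d \<and> Q \<in> carrier_mat d d \<and>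
        P * Q = 1\<^sub>m d \<and> Q * P = 1\<^sub>m d \<and> P * Z1 = Z2 * P \<and> P * X1 = X2 * P))"

definition S_mod :: "'k::field \<Rightarrow> nat \<Rightarrow> 'k hmod" where
  "S_mod q i = (mat 1 1 (\<lambda>_. q ^ i), 0\<^sub>m 1 1)"

(* M_i: basis v1, v2 (indices 0,1); x v1 = v2, x v2 = 0, z v1 = q^i v1, z v2 = q^(i+1) v2.
   Column j of the matrix is the image of the j-th basis vector. *)
definition M_mod :: "'k::field \<Rightarrow> nat \<Rightarrow> 'k hmod" where
  "M_mod q i = (mat 2 2 (\<lambda>(r,c). if r = c then (if r = 0 then q ^ i else q ^ (i+1)) else 0),
                mat 2 2 (\<lambda>(r,c). if r = 1 \<and> c = 0 then 1 else 0))"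

end

theory Submission
  imports Defs
begin

(* As q is a primitive
   2n-th root of unity, q^n = -1; hence, with s = q^(n i), x acts on M_i \<otimes> M_j by
     v1\<otimes>v1 \<mapsto> s v1\<otimes>v2 + v2\<otimes>v1,   v1\<otimes>v2 \<mapsto> v2\<otimes>v2,   v2\<otimes>v1 \<mapsto> -s v2\<otimes>v2.
   So v1\<otimes>v2 generates a copy of M_(i+j+1), and w = v1\<otimes>v1 + t v2\<otimes>v2, with t chosen so that w
   is an eigenvector of z despite the extra term of \<Delta>(z), generates a complement isomorphic to
   M_(i+j).  Likewise S_i \<otimes> M_j is M_(i+j) with the action of x rescaled by s \<noteq> 0. *)

lemma sum_lessThan_2: "(\<Sum>r<2. f r) = f 0 + f 1" for f :: "nat \<Rightarrow> 'a::comm_monoid_add"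
  by (simp add: numeral_2_eq_2)

lemma nat_less_4_iff: "r < 4 \<longleftrightarrow> r = 0 \<or> r = 1 \<or> r = 2 \<or> r = 3" for r :: nat
  by auto

lemma mat_times_mat: "mat m k f * mat k l g = mat m l (\<lambda>(i, j). \<Sum>r<k. f (i, r) * g (r, j))"
  by (rule eq_matI) (auto simp: scalar_prod_def row_def col_def intro!: sum.cong)

lemma mat_plus_mat: "mat m k f + mat m k g = mat m k (\<lambda>ij. f ij + g ij)"
  by (rule eq_matI) auto

lemma smult_mat_mat: "c \<cdot>\<^sub>m mat m k f = mat m k (\<lambda>ij. c * f ij)"
  by (rule eq_matI) auto

lemma kron_mat: "kron (mat m k f) (mat m' k' g) =
    mat (m * m') (k * k') (\<lambda>(i, j). f (i div m', j div k') * g (i mod m', j mod k'))"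
  unfolding kron_def
proof (rule eq_matI, goal_cases)
  case (1 i j)
  then have "m' > 0" "k' > 0" by (auto intro: gr0I)
  with 1 show ?case by (simp add: less_mult_imp_div_less mult.commute)
qed auto

lemma mat_diag_pow: "mat_diag d f ^\<^sub>m k = mat_diag d (\<lambda>i. f i ^ k)"
  for f :: "nat \<Rightarrow> 'a::semiring_1"
proof (induction k)
  case 0
  show ?case by (simp add: carrier_matD[OF mat_diag_dim])
next
  case (Suc k)
  then show ?case by (simp add: power_Suc2 del: power_Suc)
qed

lemma mod_iso_intro:
  assumes "P \<in> carrier_mat d d" "Q \<in> carrier_mat d d" "P * Q = 1\<^sub>m d" "Q * P = 1\<^sub>m d"
    and "dim_row Z1 = d" "dim_row Z2 = d" "P * Z1 = Z2 * P" "P * X1 = X2 * P"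
  shows "mod_iso (Z1, X1) (Z2, X2)"
  unfolding mod_iso_def using assms by auto

lemma power_mod_period:
  fixes q :: "'a::monoid_mult"
  assumes "q ^ m = 1"
  shows "q ^ (k mod m) = q ^ k"
proof -
  have "q ^ k = (q ^ m) ^ (k div m) * q ^ (k mod m)"
    by (simp flip: power_mult power_add)
  then show ?thesis
    using assms by simp
qed

lemma primitive_root_nonzero: "primitive_root m q \<Longrightarrow> 0 < m \<Longrightarrow> q \<noteq> 0"
  unfolding primitive_root_def by (auto simp: power_0_left)

lemma primitive_root_power_half:
  assumes "primitive_root (2 * n) q" "1 \<le> n"
  shows "q ^ n = -1"
proof -
  have "(q ^ n)\<^sup>2 = 1"
    using assms(1) unfolding primitive_root_def by (simp flip: power_mult add: mult.commute)
  moreover have "q ^ n \<noteq> 1"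
    using assms unfolding primitive_root_def by simp
  ultimately show ?thesis
    by (simp add: power2_eq_1_iff)
qed

lemma S_mod_diag: "S_mod q i = (mat_diag 1 (\<lambda>_. q ^ i), 0\<^sub>m 1 1)"
  unfolding S_mod_def mat_diag_def by (auto intro: cong_mat)

lemma M_mod_diag: "M_mod q i =
    (mat_diag 2 (\<lambda>r. q ^ (i + r)), mat 2 2 (\<lambda>(r, c). if r = 1 \<and> c = 0 then 1 else 0))"
  unfolding M_mod_def mat_diag_def by (auto intro!: cong_mat simp: less_Suc_eq numeral_2_eq_2)

lemma S_mod_mod_period: "q ^ m = 1 \<Longrightarrow> S_mod q (k mod m) = S_mod q k"
  unfolding S_mod_def by (simp add: power_mod_period)

lemma M_mod_mod_period: "q ^ m = 1 \<Longrightarrow> M_mod q (k mod m) = M_mod q k"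
  unfolding M_mod_diag by (metis power_add power_mod_period)

lemma tensor_S_S: "tensor_mod n q a (S_mod q i) (S_mod q j) = S_mod q (i + j)"
  by (simp add: tensor_mod_def S_mod_diag mat_diag_pow)
    (auto simp: mat_diag_def zero_mat_def one_mat_def kron_mat mat_times_mat smult_mat_mat
      mat_plus_mat power_add intro!: cong_mat)

lemma tensor_S_M:
  "tensor_mod n q a (S_mod q i) (M_mod q j) = apsnd (smult_mat ((q ^ i) ^ n)) (M_mod q (i + j))"
  by (simp add: tensor_mod_def S_mod_diag M_mod_diag mat_diag_pow)
    (auto simp: mat_diag_def zero_mat_def one_mat_def kron_mat mat_times_mat smult_mat_mat
      mat_plus_mat power_add less_Suc_eq numeral_2_eq_2 intro!: cong_mat)

lemma mod_iso_M_mod_scale_x: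
  assumes "s \<noteq> 0"
  shows "mod_iso (apsnd (smult_mat s) (M_mod q k)) (M_mod q k)"
  unfolding M_mod_diag apsnd_conv
  by (rule mod_iso_intro[where P = "mat_diag 2 (\<lambda>r. if r = 0 then s else 1)"
        and Q = "mat_diag 2 (\<lambda>r. if r = 0 then inverse s else 1)"])
    (auto simp: mat_diag_def mat_times_mat smult_mat_mat less_Suc_eq numeral_2_eq_2 assms
      intro!: cong_mat)

(* Index r of the Kronecker product of two 2x2 matrices stands for v_(r div 2) \<otimes> v_(r mod 2). *)
lemma tensor_M_M: "tensor_mod n q a (M_mod q i) (M_mod q j) =
   (mat 4 4 (\<lambda>(r, c). if r = c then q ^ (i + j + r div 2 + r mod 2)
      else if (r, c) = (3, 0) then a * (1 - inverse q ^ 2) * (q ^ (i + 1)) ^ (n + 1) * q ^ (j + 1)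
      else 0),
    mat 4 4 (\<lambda>(r, c). if (r, c) = (1, 0) then (q ^ i) ^ n
      else if (r, c) \<in> {(2, 0), (3, 1)} then 1
      else if (r, c) = (3, 2) then (q ^ (i + 1)) ^ n else 0))"
  apply (simp add: tensor_mod_def M_mod_diag mat_diag_pow)
  apply (simp add: mat_diag_def kron_mat mat_times_mat smult_mat_mat one_mat_def mat_plus_mat)
  apply (intro conjI; rule cong_mat; simp only: nat_less_4_iff; elim disjE;
      simp add: sum_lessThan_2 power_add mult_ac)
  done

lemma dsum_M_M: "dsum_mod (M_mod q k) (M_mod q (k + 1)) =
   (mat 4 4 (\<lambda>(r, c). if r = c then q ^ (k + r div 2 + r mod 2) else 0),
    mat 4 4 (\<lambda>(r, c). if (r, c) \<in> {(1, 0), (3, 2)} then 1 else 0))"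
  unfolding dsum_mod_def M_mod_diag
  by (auto simp: mat_diag_def eval_nat_numeral less_Suc_eq div_Suc mod_Suc intro!: eq_matI)

(* The columns of Q are w = v1\<otimes>v1 + t v2\<otimes>v2, x w, v1\<otimes>v2 and x (v1\<otimes>v2) = v2\<otimes>v2. *)
lemma mod_iso_four_dim_split:
  fixes q s t :: "'a::field"
  shows "mod_iso
   (mat 4 4 (\<lambda>(r, c). if r = c then q ^ (k + r div 2 + r mod 2)
      else if (r, c) = (3, 0) then t * q ^ k * (1 - q ^ 2) else 0),
    mat 4 4 (\<lambda>(r, c). if (r, c) = (1, 0) then s
      else if (r, c) \<in> {(2, 0), (3, 1)} then 1
      else if (r, c) = (3, 2) then - s else 0))
   (mat 4 4 (\<lambda>(r, c). if r = c then q ^ (k + r div 2 + r mod 2) else 0),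
    mat 4 4 (\<lambda>(r, c). if (r, c) \<in> {(1, 0), (3, 2)} then 1 else 0))"
  by (rule mod_iso_intro[where
        P = "mat 4 4 (\<lambda>(r, c). if (r, c) \<in> {(0, 0), (1, 2), (2, 1), (3, 3)} then 1
          else if (r, c) = (2, 2) then - s else if (r, c) = (3, 0) then - t else 0)" and
        Q = "mat 4 4 (\<lambda>(r, c). if (r, c) \<in> {(0, 0), (1, 2), (2, 1), (3, 3)} then 1
          else if (r, c) = (1, 1) then s else if (r, c) = (3, 0) then t else 0)"])
    (auto simp: mat_times_mat one_mat_def eval_nat_numeral less_Suc_eq div_Suc mod_Suc
      algebra_simps intro!: cong_mat)

lemma mod_iso_S_tensor_S: "mod_iso (tensor_mod n q a (S_mod q i) (S_mod q j)) (S_mod q (i + j))"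
  unfolding tensor_S_S unfolding S_mod_def
  by (rule mod_iso_intro[where P = "1\<^sub>m 1" and Q = "1\<^sub>m 1"]) auto

lemma mod_iso_S_tensor_M:
  "q \<noteq> 0 \<Longrightarrow> mod_iso (tensor_mod n q a (S_mod q i) (M_mod q j)) (M_mod q (i + j))"
  unfolding tensor_S_M by (rule mod_iso_M_mod_scale_x) simp

lemma mod_iso_M_tensor_M:
  fixes q a :: "'a::field"
  assumes "q ^ n = -1" "q \<noteq> 0"
  shows "mod_iso (tensor_mod n q a (M_mod q i) (M_mod q j))
    (dsum_mod (M_mod q (i + j)) (M_mod q (i + j + 1)))"
proof -
  \<comment> \<open>t q^(i+j) (1 - q^2) has to be the off-diagonal entry of z; as 1 - q^-2 = -(1 - q^2)/q^2,
    this t works even when q^2 = 1\<close>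
  define t where "t = - a * (q ^ (i + 1)) ^ (n + 1) * q ^ (j + 1) / (q ^ 2 * q ^ (i + j))"
  have "a * (1 - inverse q ^ 2) * (q ^ (i + 1)) ^ (n + 1) * q ^ (j + 1) =
      t * q ^ (i + j) * (1 - q ^ 2)"
    unfolding t_def using assms(2) by (simp add: field_simps)
  moreover have "(q ^ (i + 1)) ^ n = - ((q ^ i) ^ n)"
    using assms(1) by (simp add: power_mult_distrib)
  ultimately show ?thesis
    unfolding tensor_M_M dsum_M_M by (simp only: mod_iso_four_dim_split)
qed

theorem theorem2p1:
  fixes q a :: "'k::field_char_0" and n :: nat
  assumes "alg_closed TYPE('k)"
    and "n \<ge> 1"
    and "primitive_root (2*n) q"
    and "a \<noteq> 0"
  shows "\<forall>i < 2*n. \<forall>j < 2*n.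
      mod_iso (tensor_mod n q a (S_mod q i) (S_mod q j)) (S_mod q ((i+j) mod (2*n))) \<and>
      mod_iso (tensor_mod n q a (S_mod q i) (M_mod q j)) (M_mod q ((i+j) mod (2*n))) \<and>
      mod_iso (tensor_mod n q a (M_mod q i) (M_mod q j))
              (dsum_mod (M_mod q ((i+j) mod (2*n))) (M_mod q ((i+j+1) mod (2*n))))"
proof -
  have "q ^ (2 * n) = 1"
    using assms(3) unfolding primitive_root_def by simp
  then have periodic: "S_mod q (k mod (2 * n)) = S_mod q k" "M_mod q (k mod (2 * n)) = M_mod q k"
    for k by (simp_all add: S_mod_mod_period M_mod_mod_period)
  have q_nonzero: "q \<noteq> 0"
    using assms(2,3) by (simp add: primitive_root_nonzero)
  have q_power_n: "q ^ n = -1"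
    using assms(2,3) by (rule primitive_root_power_half[rotated])
  show ?thesis
    unfolding periodic
    by (intro allI impI conjI mod_iso_S_tensor_S mod_iso_S_tensor_M[OF q_nonzero]
        mod_iso_M_tensor_M[OF q_power_n q_nonzero])
qed

end
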